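(* Let $\zeta_3=\int_0^\infty \frac{\mathrm{d}t}{\sqrt{1+t^6}}$ and let $\mathrm{sleafh}_3:(-\zeta_3,\zeta_3)\to\mathbb{R}$ be the hyperbolic leaf function of basis $3$. For every real $l$ with $2l\in(-\zeta_3,\zeta_3)$, $$\mathrm{sleafh}_3(2l)=\frac{2\,\mathrm{sleafh}_3(l)\sqrt{1+(\mathrm{sleafh}_3(l))^6}}{\sqrt{1-8(\mathrm{sleafh}_3(l))^6}}.$$
   Context: For a natural number $n$, let $\zeta_n=\int_0^\infty \frac{\mathrm{d}t}{\sqrt{1+t^{2n}}}$. The hyperbolic leaf function $\mathrm{sleafh}_n$ is the solution $r(l)$ on $(-\zeta_n,\zeta_n)$ of $\frac{\mathrm{d}^2r}{\mathrm{d}l^2}=n\,r^{2n-1}$ with $r(0)=0$, $r'(0)=1$; equivalently it is the inverse function of $r\mapsto \int_0^r \frac{\mathrm{d}t}{\sqrt{1+t^{2n}}}$, $r\in\mathbb{R}$. *)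

theory Defs
  imports "HOL-Analysis.Analysis"
begin

definition zeta :: "nat \<Rightarrow> real" where
  "zeta n = integral {0..} (\<lambda>t. 1 / sqrt (1 + t ^ (2 * n)))"

definition leafh_arc :: "nat \<Rightarrow> real \<Rightarrow> real" where
  "leafh_arc n r = (if 0 \<le> r then integral {0..r} (\<lambda>t. 1 / sqrt (1 + t ^ (2 * n)))
                    else - integral {r..0} (\<lambda>t. 1 / sqrt (1 + t ^ (2 * n))))"

text \<open>sleafh_n is the inverse function of leafh_arc n (meaningful on (-zeta n, zeta n)).\<close>
definition sleafh :: "nat \<Rightarrow> real \<Rightarrow> real" where
  "sleafh n l = (THE r. leafh_arc n r = l)"

end

theory Submission imports Defs begin

text \<open>Write \<open>F = leafh_arc 3\<close> and \<open>D s = 2 s sqrt (1 + s\<^sup>6) / sqrt (1 - 8 s\<^sup>6)\<close>.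
  A direct computation gives \<open>F'(D s) D'(s) = 2 F'(s)\<close> for \<open>8 s\<^sup>6 < 1\<close>, so \<open>F (D s) = 2 F s\<close>
  there. Since \<open>D\<close> maps \<open>[0, c)\<close>, \<open>c = (1/8)\<^sup>1\<^sup>/\<^sup>6\<close>, onto \<open>[0, \<infinity>)\<close>, we get \<open>zeta 3 \<le> 2 F c\<close>;
  hence every \<open>l\<close> with \<open>|2 l| < zeta 3\<close> is \<open>F s\<close> for some \<open>|s| < c\<close>, and then
  \<open>sleafh 3 (2 l) = D s\<close>.\<close>

definition leafh_density :: "nat \<Rightarrow> real \<Rightarrow> real" where
  "leafh_density n t = 1 / sqrt (1 + t ^ (2 * n))"

lemma one_plus_even_power_pos: "0 < 1 + (t::real) ^ (2 * n)"
  by (simp add: add_pos_nonneg power_mult)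

lemma leafh_density_pos: "0 < leafh_density n t"
  using one_plus_even_power_pos[of t n] by (simp add: leafh_density_def)

lemma leafh_density_even: "leafh_density n (- t) = leafh_density n t"
  by (simp add: leafh_density_def power_mult)

lemma continuous_on_leafh_density: "continuous_on S (leafh_density n)"
  unfolding leafh_density_def
  using one_plus_even_power_pos by (intro continuous_intros) (auto simp: less_imp_neq[symmetric])

lemma integrable_leafh_density: "leafh_density n integrable_on {a..b}"
  by (intro integrable_continuous_interval continuous_on_leafh_density)

lemma leafh_arc_eq:
  "leafh_arc n r =
    (if 0 \<le> r then integral {0..r} (leafh_density n) else - integral {r..0} (leafh_density n))"
  unfolding leafh_arc_def leafh_density_def by simp

lemma leafh_arc_0 [simp]: "leafh_arc n 0 = 0"
  by (simp add: leafh_arc_eq)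

lemma leafh_arc_has_real_derivative:
  "(leafh_arc n has_real_derivative leafh_density n x) (at x)"
proof -
  define M where "M = \<bar>x\<bar> + 1"
  define \<Phi> where "\<Phi> y = integral {-M..y} (leafh_density n)" for y
  have arc_eq_\<Phi>: "leafh_arc n y = \<Phi> y - \<Phi> 0" if "y \<in> {-M<..<M}" for y
  proof (cases "0 \<le> y")
    case True
    have "-M \<le> 0" by (simp add: M_def)
    from Henstock_Kurzweil_Integration.integral_combine[OF this True integrable_leafh_density[of n]]
    show ?thesis using True by (simp add: leafh_arc_eq \<Phi>_def)
  next
    case False
    have "-M \<le> y" "y \<le> 0" using that False by auto
    from Henstock_Kurzweil_Integration.integral_combine[OF this integrable_leafh_density[of n]]
    show ?thesis using False by (simp add: leafh_arc_eq \<Phi>_def)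
  qed
  have "(\<Phi> has_real_derivative leafh_density n x) (at x within {-M..M})"
    unfolding \<Phi>_def
    by (rule integral_has_real_derivative) (auto simp: continuous_on_leafh_density M_def)
  moreover have "at x within {-M..M} = at x"
    by (rule at_within_interior) (auto simp: M_def)
  ultimately have "((\<lambda>y. \<Phi> y - \<Phi> 0) has_real_derivative leafh_density n x) (at x)"
    by (auto intro!: derivative_eq_intros)
  then show ?thesis
    by (rule has_field_derivative_transform_within_open[of _ _ _ "{-M<..<M}"])
       (auto simp: arc_eq_\<Phi> M_def)
qed

lemma continuous_on_leafh_arc: "continuous_on S (leafh_arc n)"
  by (intro continuous_at_imp_continuous_on ballI DERIV_isCont[OF leafh_arc_has_real_derivative])

lemma leafh_arc_strict_mono: "strict_mono (leafh_arc n)"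
proof (rule strict_monoI)
  show "leafh_arc n x < leafh_arc n y" if "x < y" for x y
    using that by (rule DERIV_pos_imp_increasing)
      (auto intro: leafh_arc_has_real_derivative leafh_density_pos)
qed

lemma leafh_arc_less_iff [simp]: "leafh_arc n x < leafh_arc n y \<longleftrightarrow> x < y"
  by (rule strict_mono_less[OF leafh_arc_strict_mono])

lemma leafh_arc_le_iff [simp]: "leafh_arc n x \<le> leafh_arc n y \<longleftrightarrow> x \<le> y"
  by (rule strict_mono_less_eq[OF leafh_arc_strict_mono])

lemma leafh_arc_eq_iff [simp]: "leafh_arc n x = leafh_arc n y \<longleftrightarrow> x = y"
  by (rule strict_mono_eq[OF leafh_arc_strict_mono])

lemma leafh_arc_minus: "leafh_arc n (- x) = - leafh_arc n x"
proof -
  have "((\<lambda>x. leafh_arc n (- x) + leafh_arc n x) has_real_derivative 0) (at y)" for y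
  proof -
    have "((\<lambda>x. leafh_arc n (- x)) has_real_derivative leafh_density n (- y) * (- 1)) (at y)"
      by (rule DERIV_chain2[OF leafh_arc_has_real_derivative])
         (auto intro!: derivative_eq_intros)
    then show ?thesis
      using leafh_arc_has_real_derivative[of n y]
      by (auto intro!: derivative_eq_intros simp: leafh_density_even)
  qed
  from DERIV_isconst_all[OF allI[OF this], of x 0] show ?thesis by simp
qed

lemma sleafh_eqI: "leafh_arc n r = l \<Longrightarrow> sleafh n l = r"
  unfolding sleafh_def by (rule the_equality) auto

text \<open>The integral defining \<open>zeta\<close> is improper, so it is reached by monotone convergence from
  the truncated integrals \<open>leafh_arc n k\<close>.\<close>

lemma zeta_le_bound_of_leafh_arc:
  assumes bound: "\<And>r. 0 \<le> r \<Longrightarrow> leafh_arc n r \<le> B"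
  shows "zeta n \<le> B"
proof -
  define g where "g k x = (if x \<in> {0..real k} then leafh_density n x else 0)" for k :: nat and x
  have integral_g: "integral {0..} (g k) = leafh_arc n (real k)" for k
    unfolding g_def integral_restrict_Int leafh_arc_eq
    by (simp add: Int_absorb1 Int_commute)
  have "leafh_density n integrable_on {0..} \<and>
      ((\<lambda>k. integral {0..} (g k)) \<longlonglongrightarrow> integral {0..} (leafh_density n))"
  proof (rule monotone_convergence_increasing)
    show "g k integrable_on {0..}" for k
      unfolding g_def integrable_restrict_Int
      by (simp add: Int_absorb1 Int_commute integrable_leafh_density)
    show "g k x \<le> g (Suc k) x" if "x \<in> {0..}" for k x
      using that leafh_density_pos[of n x] by (auto simp: g_def less_imp_le)
    show "(\<lambda>k. g k x) \<longlonglongrightarrow> leafh_density n x" if "x \<in> {0..}" for x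
    proof -
      obtain N :: nat where "x \<le> real N" using real_arch_simple by blast
      then have "\<forall>k\<ge>N. g k x = leafh_density n x" using that by (auto simp: g_def)
      then show ?thesis by (intro tendsto_eventually) (auto simp: eventually_sequentially)
    qed
    have "\<bar>leafh_arc n (real k)\<bar> \<le> B" for k
      using bound[of "real k"] leafh_arc_le_iff[of n 0 "real k"] by simp
    then show "bounded (range (\<lambda>k. integral {0..} (g k)))"
      unfolding integral_g bounded_iff by auto
  qed
  moreover have "zeta n = integral {0..} (leafh_density n)"
    by (simp add: zeta_def leafh_density_def [abs_def])
  ultimately have "(\<lambda>k. leafh_arc n (real k)) \<longlonglongrightarrow> zeta n"
    by (simp add: integral_g)
  then show ?thesis
    by (rule LIMSEQ_le_const2) (use bound in auto)
qed

definition leafh3_double :: "real \<Rightarrow> real" where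
  "leafh3_double s = 2 * s * sqrt (1 + s ^ 6) / sqrt (1 - 8 * s ^ 6)"

definition leafh3_double_radius :: real where
  "leafh3_double_radius = root 6 (1 / 8)"

lemma leafh3_double_radius_pos: "0 < leafh3_double_radius"
  by (simp add: leafh3_double_radius_def)

lemma abs_less_leafh3_double_radius_iff: "\<bar>s\<bar> < leafh3_double_radius \<longleftrightarrow> 8 * s ^ 6 < 1"
proof -
  have "\<bar>s\<bar> = root 6 (\<bar>s\<bar> ^ 6)" by (rule real_root_power_cancel[symmetric]) auto
  then have "\<bar>s\<bar> < leafh3_double_radius \<longleftrightarrow> \<bar>s\<bar> ^ 6 < 1 / 8"
    unfolding leafh3_double_radius_def by (metis real_root_less_iff zero_less_numeral)
  also have "\<bar>s\<bar> ^ 6 = s ^ 6" by (simp add: power_even_abs)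
  finally show ?thesis by linarith
qed

lemma leafh3_double_has_real_derivative:
  assumes "8 * x ^ 6 < 1"
  shows "(leafh3_double has_real_derivative
      2 * (1 + 20 * x ^ 6 - 8 * (x ^ 6) ^ 2) / (sqrt (1 + x ^ 6) * sqrt (1 - 8 * x ^ 6) ^ 3)) (at x)"
proof -
  define a where "a = sqrt (1 + x ^ 6)"
  define b where "b = sqrt (1 - 8 * x ^ 6)"
  have pos: "0 < 1 + x ^ 6" using one_plus_even_power_pos[of x 3] by simp
  have "0 < a" "0 < b" using pos assms by (simp_all add: a_def b_def)
  have a2: "a ^ 2 = 1 + x ^ 6" using pos by (simp add: a_def)
  have b2: "b ^ 2 = 1 - 8 * x ^ 6" using assms by (simp add: b_def)
  have "x ^ 5 * x = x ^ 6" by (subst power_Suc2[symmetric]) simp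
  then have x6: "x ^ 5 * x = x ^ 6" "x * x ^ 5 = x ^ 6" by (simp_all add: mult.commute)
  have "(leafh3_double has_real_derivative
      ((2 * a + 6 * (x ^ 5 * (inverse a * x))) * b + 48 * (x * (a * (x ^ 5 * inverse b))))
        / (1 - 8 * x ^ 6)) (at x)"
    unfolding leafh3_double_def a_def b_def using assms pos
    by (auto intro!: derivative_eq_intros)
  also have "((2 * a + 6 * (x ^ 5 * (inverse a * x))) * b + 48 * (x * (a * (x ^ 5 * inverse b))))
        / (1 - 8 * x ^ 6) = ((2 * a ^ 2 + 6 * x ^ 6) * b ^ 2 + 48 * x ^ 6 * a ^ 2) / (a * b ^ 3)"
    unfolding b2[symmetric] using \<open>0 < a\<close> \<open>0 < b\<close> x6
    by (simp add: field_simps power2_eq_square power3_eq_cube)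
  also have "(2 * a ^ 2 + 6 * x ^ 6) * b ^ 2 + 48 * x ^ 6 * a ^ 2
      = 2 * (1 + 20 * x ^ 6 - 8 * (x ^ 6) ^ 2)"
    unfolding a2 b2 by (simp add: algebra_simps power2_eq_square)
  finally show ?thesis by (simp add: a_def b_def)
qed

lemma leafh3_double_numerator_pos:
  assumes "0 \<le> u" "8 * u < (1::real)"
  shows "0 < 1 + 20 * u - 8 * u ^ 2"
proof -
  have "u * (8 * u) \<le> u * 1" using assms by (intro mult_left_mono) auto
  then show ?thesis using assms by (simp add: power2_eq_square)
qed

text \<open>With \<open>u = s\<^sup>6\<close>: \<open>(1 - 8u)\<^sup>3 + 64 u (1 + u)\<^sup>3 = (1 + 20 u - 8 u\<^sup>2)\<^sup>2\<close>.\<close>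

lemma sqrt_one_plus_leafh3_double_pow6:
  assumes "8 * s ^ 6 < 1"
  shows "sqrt (1 + leafh3_double s ^ 6) = (1 + 20 * s ^ 6 - 8 * (s ^ 6) ^ 2) / sqrt (1 - 8 * s ^ 6) ^ 3"
proof -
  define u where "u = s ^ 6"
  define b where "b = sqrt (1 - 8 * u)"
  define P where "P = 1 + 20 * u - 8 * u ^ 2"
  have "0 \<le> u" by (simp add: u_def zero_le_even_power)
  have "8 * u < 1" using assms by (simp add: u_def)
  have "0 < b" using \<open>8 * u < 1\<close> by (simp add: b_def)
  have b2: "b ^ 2 = 1 - 8 * u" using \<open>8 * u < 1\<close> by (simp add: b_def)
  have "0 < P" unfolding P_def using \<open>0 \<le> u\<close> \<open>8 * u < 1\<close> by (rule leafh3_double_numerator_pos)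
  have a2: "sqrt (1 + u) ^ 2 = 1 + u" using \<open>0 \<le> u\<close> by simp
  have "leafh3_double s = 2 * s * sqrt (1 + u) / b" by (simp add: leafh3_double_def b_def u_def)
  then have "leafh3_double s ^ 6 = 64 * s ^ 6 * (sqrt (1 + u) ^ 2) ^ 3 / (b ^ 2) ^ 3"
    by (simp add: power_divide power_mult_distrib flip: power_mult)
  also have "\<dots> = 64 * u * (1 + u) ^ 3 / (1 - 8 * u) ^ 3" by (simp add: a2 b2 u_def)
  finally have D6: "leafh3_double s ^ 6 = 64 * u * (1 + u) ^ 3 / (1 - 8 * u) ^ 3" .
  have "(P / b ^ 3) ^ 2 = P ^ 2 / (b ^ 2) ^ 3" by (simp add: power_divide flip: power_mult)
  also have "\<dots> = P ^ 2 / (1 - 8 * u) ^ 3" by (simp add: b2)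
  also have "\<dots> = 1 + leafh3_double s ^ 6"
    unfolding D6 using \<open>8 * u < 1\<close>
    by (simp add: field_simps P_def) (simp add: algebra_simps power2_eq_square power3_eq_cube)
  finally have "sqrt (1 + leafh3_double s ^ 6) = P / b ^ 3"
    by (intro real_sqrt_unique) (use \<open>0 < P\<close> \<open>0 < b\<close> in auto)
  then show ?thesis by (simp add: P_def b_def u_def)
qed

lemma leafh_density_leafh3_double_chain_rule:
  assumes "8 * x ^ 6 < 1"
  shows "leafh_density 3 (leafh3_double x) *
      (2 * (1 + 20 * x ^ 6 - 8 * (x ^ 6) ^ 2) / (sqrt (1 + x ^ 6) * sqrt (1 - 8 * x ^ 6) ^ 3))
    = 2 * leafh_density 3 x"
proof -
  define P where "P = 1 + 20 * x ^ 6 - 8 * (x ^ 6) ^ 2"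
  define a where "a = sqrt (1 + x ^ 6)"
  define b where "b = sqrt (1 - 8 * x ^ 6)"
  have "0 < P" unfolding P_def
    using assms by (intro leafh3_double_numerator_pos) (simp_all add: zero_le_even_power)
  have "0 < a" using one_plus_even_power_pos[of x 3] by (simp add: a_def)
  have "0 < b" using assms by (simp add: b_def)
  have "leafh_density 3 (leafh3_double x) = b ^ 3 / P"
    using sqrt_one_plus_leafh3_double_pow6[OF assms] by (simp add: leafh_density_def P_def b_def)
  moreover have "leafh_density 3 x = 1 / a" by (simp add: leafh_density_def a_def)
  ultimately show ?thesis
    unfolding P_def [symmetric] a_def [symmetric] b_def [symmetric]
    using \<open>0 < P\<close> \<open>0 < a\<close> \<open>0 < b\<close> by (simp add: field_simps)
qed

lemma leafh_arc3_double:
  assumes "8 * s ^ 6 < 1"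
  shows "leafh_arc 3 (leafh3_double s) = 2 * leafh_arc 3 s"
proof -
  let ?c = leafh3_double_radius
  let ?h = "\<lambda>x. leafh_arc 3 (leafh3_double x) - 2 * leafh_arc 3 x"
  have "(?h has_real_derivative 0) (at x)" if "x \<in> {-?c<..<?c}" for x
  proof -
    have x: "8 * x ^ 6 < 1"
      using that abs_less_leafh3_double_radius_iff[of x] by auto
    have "((\<lambda>x. leafh_arc 3 (leafh3_double x)) has_real_derivative 2 * leafh_density 3 x) (at x)"
      using DERIV_chain2[OF leafh_arc_has_real_derivative[of 3] leafh3_double_has_real_derivative[OF x]]
      by (simp only: leafh_density_leafh3_double_chain_rule[OF x])
    then show ?thesis
      using leafh_arc_has_real_derivative[of 3 x] by (auto intro!: derivative_eq_intros)
  qed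
  moreover have "s \<in> {-?c<..<?c}" "0 \<in> {-?c<..<?c}"
    using assms abs_less_leafh3_double_radius_iff[of s] leafh3_double_radius_pos by auto
  ultimately have "?h s = ?h 0"
    by (intro DERIV_isconst3[of "-?c" ?c]) auto
  then show ?thesis by (simp add: leafh3_double_def)
qed

lemma leafh3_double_unbounded:
  assumes "0 \<le> r"
  obtains s where "0 \<le> s" "8 * s ^ 6 < 1" "r \<le> leafh3_double s"
proof -
  define d where "d = root 6 (1 / 16)"
  define \<delta> where "\<delta> = min (1 / 2) ((d / (r + 1)) ^ 2)"
  define s where "s = root 6 ((1 - \<delta>) / 8)"
  have "0 < d" by (simp add: d_def)
  have "0 < \<delta>" "\<delta> \<le> 1 / 2" using \<open>0 < d\<close> assms by (simp_all add: \<delta>_def)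
  have s6: "s ^ 6 = (1 - \<delta>) / 8" unfolding s_def using \<open>\<delta> \<le> 1 / 2\<close> by simp
  have "d \<le> s" unfolding s_def d_def using \<open>\<delta> \<le> 1 / 2\<close> by (intro real_root_le_mono) auto
  define b where "b = sqrt (1 - 8 * s ^ 6)"
  have b_eq: "b = sqrt \<delta>" unfolding b_def s6 by (simp add: field_simps)
  have "0 < b" using \<open>0 < \<delta>\<close> b_eq by simp
  have "b \<le> sqrt ((d / (r + 1)) ^ 2)" unfolding b_eq \<delta>_def by (rule real_sqrt_le_mono) simp
  also have "\<dots> = d / (r + 1)" using \<open>0 < d\<close> assms by simp
  finally have "b \<le> d / (r + 1)" .
  have "r \<le> 2 * (r + 1)" using assms by simp
  also have "\<dots> = 2 * d / (d / (r + 1))" using \<open>0 < d\<close> assms by (simp add: field_simps)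
  also have "\<dots> \<le> 2 * d / b"
    using \<open>b \<le> d / (r + 1)\<close> \<open>0 < b\<close> \<open>0 < d\<close> assms by (intro divide_left_mono) auto
  also have "\<dots> \<le> 2 * s / b" using \<open>d \<le> s\<close> \<open>0 < b\<close> by (intro divide_right_mono) auto
  also have "\<dots> \<le> 2 * s * sqrt (1 + s ^ 6) / b"
    using \<open>d \<le> s\<close> \<open>0 < d\<close> \<open>0 < b\<close> by (intro divide_right_mono mult_left_mono) auto
  finally have "r \<le> leafh3_double s" by (simp add: leafh3_double_def b_def)
  moreover have "8 * s ^ 6 < 1" using s6 \<open>0 < \<delta>\<close> by simp
  moreover have "0 \<le> s" using \<open>d \<le> s\<close> \<open>0 < d\<close> by simp
  ultimately show thesis using that by blast
qed

lemma zeta3_le_twice_leafh_arc_radius: "zeta 3 \<le> 2 * leafh_arc 3 leafh3_double_radius"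
proof (rule zeta_le_bound_of_leafh_arc)
  fix r :: real
  assume "0 \<le> r"
  then obtain s where s: "0 \<le> s" "8 * s ^ 6 < 1" "r \<le> leafh3_double s"
    by (rule leafh3_double_unbounded)
  have "leafh_arc 3 r \<le> leafh_arc 3 (leafh3_double s)" using s by simp
  also have "\<dots> = 2 * leafh_arc 3 s" using leafh_arc3_double s by simp
  also have "\<dots> \<le> 2 * leafh_arc 3 leafh3_double_radius"
    using s abs_less_leafh3_double_radius_iff[of s] by simp
  finally show "leafh_arc 3 r \<le> 2 * leafh_arc 3 leafh3_double_radius" .
qed

theorem mainTheorem10:
  fixes l :: real
  assumes "- zeta 3 < 2 * l" and "2 * l < zeta 3"
  shows "sleafh 3 (2 * l) =
    2 * sleafh 3 l * sqrt (1 + (sleafh 3 l) ^ 6) / sqrt (1 - 8 * (sleafh 3 l) ^ 6)"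
proof -
  let ?c = leafh3_double_radius
  have l_between: "leafh_arc 3 (- ?c) < l" "l < leafh_arc 3 ?c"
    using assms zeta3_le_twice_leafh_arc_radius leafh_arc_minus[of 3 ?c] by auto
  then obtain s where s: "- ?c \<le> s" "s \<le> ?c" "leafh_arc 3 s = l"
    using IVT'[of "leafh_arc 3" "- ?c" l ?c] leafh3_double_radius_pos continuous_on_leafh_arc
    by force
  then have "\<bar>s\<bar> < ?c" using l_between by auto
  then have s_in: "8 * s ^ 6 < 1" by (simp add: abs_less_leafh3_double_radius_iff)
  have "sleafh 3 l = s" using s by (intro sleafh_eqI)
  moreover have "sleafh 3 (2 * l) = leafh3_double s"
    using leafh_arc3_double[OF s_in] s by (intro sleafh_eqI) simp
  ultimately show ?thesis by (simp add: leafh3_double_def)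
qed

end
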